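(* Let $k\ge1$. Conditional on the attack cycle starting with SS, the probability that it ends with exactly $k$ consecutive letters H is $pq^{k-1}$.
   Context: Honest hashrate $p$, attacker hashrate $q$, $p+q=1$, $0<q<p$. The attack cycles starting with SS are the words $SSwH$ over $\{S,H\}$ with $w$ a Dyck word (S up-step, H down-step: equally many S and H, every prefix with at least as many S as H), with $\mathbb{P}[SSwH]=q^2p(pq)^{|w|}$ where $|w|$ is half the length of $w$. *)

theory Defs
  imports "HOL-Analysis.Analysis"
begin

datatype letter = S | H

definition nS :: "letter list \<Rightarrow> nat" where "nS xs = length (filter (\<lambda>c. c = S) xs)"
definition nH :: "letter list \<Rightarrow> nat" where "nH xs = length (filter (\<lambda>c. c = H) xs)"

definition dyck :: "letter list \<Rightarrow> bool" where
  "dyck w \<longleftrightarrow> nS w = nH w \<and> (\<forall>i \<le> length w. nH (take i w) \<le> nS (take i w))"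

definition SS_cycles :: "letter list set" where
  "SS_cycles = {[S, S] @ w @ [H] | w. dyck w}"

text \<open>Probability of the cycle SSwH is q^2 p (pq)^|w|, |w| = half the length of w.
  For c = SSwH, length w = length c - 3.\<close>
definition cycle_prob :: "real \<Rightarrow> real \<Rightarrow> letter list \<Rightarrow> real" where
  "cycle_prob p q c = q^2 * p * (p * q) ^ ((length c - 3) div 2)"

definition final_H_run :: "letter list \<Rightarrow> nat" where
  "final_H_run c = length (takeWhile (\<lambda>x. x = H) (rev c))"

end

theory Submission
  imports Defs
begin

text \<open>A nonempty Dyck word w decomposes uniquely at its last return to height zero as
  w = v S u H with v, u Dyck words, and its final run of H's is one longer than that of u.
  Hence, with x = pq and F the weighted sum of all Dyck words, F = 1 + x F^2 and the
  Dyck words ending in exactly j letters H have total weight (x F)^j. The partial sums of F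
  are bounded by 1/p, which selects the root F = 1/p, so that x F = q.\<close>

fun dyck_path :: "int \<Rightarrow> int \<Rightarrow> letter list \<Rightarrow> bool" where
  "dyck_path h e [] \<longleftrightarrow> h = e"
| "dyck_path h e (S # w) \<longleftrightarrow> dyck_path (h + 1) e w"
| "dyck_path h e (H # w) \<longleftrightarrow> 0 < h \<and> dyck_path (h - 1) e w"

definition height :: "letter list \<Rightarrow> int" where
  "height w = int (nS w) - int (nH w)"

lemma nS_simps [simp]:
  "nS [] = 0" "nS (S # w) = Suc (nS w)" "nS (H # w) = nS w" "nS (v @ w) = nS v + nS w"
  by (simp_all add: nS_def)

lemma nH_simps [simp]:
  "nH [] = 0" "nH (S # w) = nH w" "nH (H # w) = Suc (nH w)" "nH (v @ w) = nH v + nH w"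
  by (simp_all add: nH_def)

lemma height_simps [simp]:
  "height [] = 0" "height (S # w) = height w + 1" "height (H # w) = height w - 1"
  by (simp_all add: height_def)

lemma length_eq_nS_plus_nH: "length w = nS w + nH w"
proof (induction w)
  case (Cons a w) then show ?case by (cases a) auto
qed simp

lemma dyck_path_append: "dyck_path h e (v @ w) \<longleftrightarrow> (\<exists>m. dyck_path h m v \<and> dyck_path m e w)"
proof (induction v arbitrary: h)
  case (Cons a v) then show ?case by (cases a) auto
qed simp

lemma dyck_path_end_height: "dyck_path h e w \<Longrightarrow> e = h + height w"
proof (induction w arbitrary: h)
  case (Cons a w) then show ?case by (cases a) (auto dest: Cons.IH)
qed simp

lemma dyck_path_end_nonneg: "dyck_path h e w \<Longrightarrow> 0 \<le> h \<Longrightarrow> 0 \<le> e"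
proof (induction w arbitrary: h)
  case (Cons a w) then show ?case by (cases a) auto
qed simp

lemma dyck_path_shift: "dyck_path h e w \<Longrightarrow> 0 \<le> c \<Longrightarrow> dyck_path (h + c) (e + c) w"
proof (induction w arbitrary: h)
  case (Cons a w) then show ?case by (cases a) (auto dest: Cons.IH simp: algebra_simps)
qed simp

lemma dyck_path_iff:
  assumes "0 \<le> h"
  shows "dyck_path h e w \<longleftrightarrow> e = h + height w \<and> (\<forall>i\<le>length w. 0 \<le> h + height (take i w))"
  using assms
proof (induction w arbitrary: h)
  case (Cons a w)
  have all_le_Suc: "(\<forall>i\<le>Suc n. P i) \<longleftrightarrow> P 0 \<and> (\<forall>i\<le>n. P (Suc i))" for n and P :: "nat \<Rightarrow> bool"
    by (metis Suc_le_mono le0 not0_implies_Suc)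
  show ?case
  proof (cases a)
    case S
    then show ?thesis
      using Cons.IH[of "h + 1"] Cons.prems
      by (simp only: length_Cons all_le_Suc) (simp add: algebra_simps)
  next
    case H
    \<comment> \<open>the prefix [H] of H # w is what forces 0 < h\<close>
    have "0 \<le> h - 1 + height (take 0 w) \<longleftrightarrow> 0 < h" by simp
    then show ?thesis
      using H Cons.IH[of "h - 1"] Cons.prems
      by (simp only: length_Cons all_le_Suc) (auto simp: algebra_simps simp del: take_0)
  qed
qed auto

lemma dyck_iff_dyck_path: "dyck w \<longleftrightarrow> dyck_path 0 0 w"
  unfolding dyck_def using dyck_path_iff[of 0 0 w] by (auto simp: height_def)

lemma length_dyck: "dyck w \<Longrightarrow> length w = 2 * nS w"
  using dyck_def length_eq_nS_plus_nH by simp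

subsection \<open>Last-return decomposition\<close>

definition dyck_join :: "letter list \<Rightarrow> letter list \<Rightarrow> letter list" where
  "dyck_join v u = v @ S # u @ [H]"

lemma dyck_Nil: "dyck []"
  by (simp add: dyck_iff_dyck_path)

lemma dyck_dyck_join: "dyck v \<Longrightarrow> dyck u \<Longrightarrow> dyck (dyck_join v u)"
  unfolding dyck_iff_dyck_path dyck_join_def
  using dyck_path_shift[of 0 0 u 1] by (auto simp: dyck_path_append)

text \<open>A path from height 0 to height e > 0 splits at its last up-step from height e - 1.\<close>

lemma dyck_path_last_up_step:
  "dyck_path 0 e w \<Longrightarrow> 0 < e \<Longrightarrow> \<exists>v u. w = v @ S # u \<and> dyck_path 0 (e - 1) v \<and> dyck u"
proof (induction w arbitrary: e rule: length_induct)
  case (1 w)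
  have IH: "\<exists>v u. ys = v @ S # u \<and> dyck_path 0 (d - 1) v \<and> dyck u"
    if "length ys < length w" "dyck_path 0 d ys" "0 < d" for ys d
    using "1.IH" that by blast
  obtain xs a where w: "w = xs @ [a]"
    using "1.prems" by (cases w rule: rev_exhaust) auto
  with "1.prems"(1) obtain m where xs: "dyck_path 0 m xs" and a: "dyck_path m e [a]"
    by (auto simp: dyck_path_append)
  show ?case
  proof (cases a)
    case S
    with a have "m = e - 1" by simp
    with xs w S dyck_Nil have "w = xs @ S # [] \<and> dyck_path 0 (e - 1) xs \<and> dyck []" by simp
    then show ?thesis by blast
  next
    case H
    with a have "m = e + 1" by auto
    with IH[of xs m] xs w "1.prems"(2) obtain v u
      where xs_eq: "xs = v @ S # u" and v: "dyck_path 0 e v" and u: "dyck u"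
      by auto
    with IH[of v e] w "1.prems"(2) obtain v' u'
      where v_eq: "v = v' @ S # u'" and v': "dyck_path 0 (e - 1) v'" and u': "dyck u'"
      by auto
    have "w = v' @ S # dyck_join u' u"
      using H w xs_eq v_eq by (simp add: dyck_join_def)
    with v' u' u show ?thesis
      by (blast intro: dyck_dyck_join)
  qed
qed

lemma dyck_last_return:
  assumes "dyck w" "w \<noteq> []"
  obtains v u where "w = dyck_join v u" "dyck v" "dyck u"
proof -
  obtain xs a where w: "w = xs @ [a]"
    using assms(2) by (cases w rule: rev_exhaust) auto
  with assms(1) obtain m where xs: "dyck_path 0 m xs" and a: "dyck_path m 0 [a]"
    by (auto simp: dyck_iff_dyck_path dyck_path_append)
  have "0 \<le> m"
    using dyck_path_end_nonneg[OF xs] by simp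
  with a have "a = H" and "m = 1"
    by (cases a; simp)+
  with xs obtain v u where xs_eq: "xs = v @ S # u" and "dyck v" "dyck u"
    using dyck_path_last_up_step[of 1 xs] by (auto simp: dyck_iff_dyck_path)
  moreover have "w = dyck_join v u"
    using w xs_eq \<open>a = H\<close> by (simp add: dyck_join_def)
  ultimately show ?thesis
    using that by blast
qed

text \<open>Were v shorter than v', then v' = v S t for a prefix t of u, so t would have height -1.\<close>

lemma dyck_join_eq_imp_eq_left:
  assumes "dyck_join v u = dyck_join v' u'" "length v \<le> length v'"
    and "dyck v" "dyck u" "dyck v'"
  shows "v = v'"
proof (rule ccontr)
  assume "v \<noteq> v'"
  define r where "r = drop (length v) v'"
  from assms(1,2) have "v = take (length v) v'" and rest: "S # u = r @ S # u'"
    unfolding dyck_join_def r_def by (auto simp: append_eq_append_conv_if)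
  then have v': "v' = v @ r"
    unfolding r_def by (metis append_take_drop_id)
  with \<open>v \<noteq> v'\<close> rest obtain t where r: "r = S # t"
    by (cases r) auto
  with rest have u: "u = t @ S # u'"
    by simp
  have "height (S # t) = 0"
    using assms(3,5) v' r by (auto simp: dyck_def height_def)
  moreover obtain m where "dyck_path 0 m t"
    using assms(4) u by (auto simp: dyck_iff_dyck_path dyck_path_append)
  then have "0 \<le> height t"
    using dyck_path_end_height dyck_path_end_nonneg by fastforce
  ultimately show False
    by simp
qed

lemma dyck_join_inject:
  assumes "dyck_join v u = dyck_join v' u'" "dyck v" "dyck u" "dyck v'" "dyck u'"
  shows "v = v' \<and> u = u'"
proof -
  have "v = v'"
    using assms dyck_join_eq_imp_eq_left[of v u v' u'] dyck_join_eq_imp_eq_left[of v' u' v u]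
    by (cases "length v \<le> length v'") auto
  with assms(1) show ?thesis
    by (simp add: dyck_join_def)
qed

lemma final_H_run_dyck_join: "final_H_run (dyck_join v u) = Suc (final_H_run u)"
  by (simp add: final_H_run_def dyck_join_def takeWhile_tail)

lemma inj_on_dyck_join: "inj_on (case_prod dyck_join) (Collect dyck \<times> Collect dyck)"
  by (rule inj_onI) (auto dest: dyck_join_inject)

lemma Collect_dyck_eq: "Collect dyck = insert [] (case_prod dyck_join ` (Collect dyck \<times> Collect dyck))"
  by (auto intro: dyck_Nil dyck_dyck_join elim: dyck_last_return)

lemma dyck_final_H_run_0: "{w. dyck w \<and> final_H_run w = 0} = {[]}"
proof -
  have "w = []" if "dyck w" "final_H_run w = 0" for w
  proof (rule ccontr)
    assume "w \<noteq> []"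
    with that(1) obtain v u where "w = dyck_join v u"
      by (rule dyck_last_return)
    with that(2) show False
      by (simp add: final_H_run_dyck_join)
  qed
  then show ?thesis
    by (auto simp: dyck_Nil final_H_run_def)
qed

lemma dyck_final_H_run_Suc:
  "{w. dyck w \<and> final_H_run w = Suc j} =
     case_prod dyck_join ` (Collect dyck \<times> {w. dyck w \<and> final_H_run w = j})"
proof -
  have "w \<in> case_prod dyck_join ` (Collect dyck \<times> {w. dyck w \<and> final_H_run w = j})"
    if "dyck w" "final_H_run w = Suc j" for w
  proof -
    have "w \<noteq> []"
      using that by (auto simp: final_H_run_def)
    with that(1) obtain v u where "w = dyck_join v u" "dyck v" "dyck u"
      by (rule dyck_last_return)
    with that(2) show ?thesis
      by (auto simp: final_H_run_dyck_join)
  qed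
  moreover have "case_prod dyck_join ` (Collect dyck \<times> {w. dyck w \<and> final_H_run w = j})
      \<subseteq> {w. dyck w \<and> final_H_run w = Suc j}"
    by (auto simp: final_H_run_dyck_join intro: dyck_dyck_join)
  ultimately show ?thesis
    by blast
qed

lemma finite_dyck_length_le: "finite {w. dyck w \<and> length w \<le> n}"
proof (rule finite_subset)
  show "{w. dyck w \<and> length w \<le> n} \<subseteq> {w. set w \<subseteq> {S, H} \<and> length w \<le> n}"
    using letter.exhaust by blast
qed (rule finite_lists_length_le, simp)

lemma dyck_length_le_Suc_subset:
  "{w. dyck w \<and> length w \<le> 2 * Suc n} \<subseteq>
     insert [] (case_prod dyck_join ` ({w. dyck w \<and> length w \<le> 2 * n} \<times> {w. dyck w \<and> length w \<le> 2 * n}))"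
proof
  fix w assume w: "w \<in> {w. dyck w \<and> length w \<le> 2 * Suc n}"
  show "w \<in> insert [] (case_prod dyck_join ` ({w. dyck w \<and> length w \<le> 2 * n} \<times> {w. dyck w \<and> length w \<le> 2 * n}))"
  proof (cases "w = []")
    case False
    with w obtain v u where "w = dyck_join v u" "dyck v" "dyck u"
      using dyck_last_return by blast
    with w show ?thesis
      by (auto simp: dyck_join_def image_iff)
  qed simp
qed

subsection \<open>Weighted sums of Dyck words\<close>

definition dyck_weight :: "real \<Rightarrow> letter list \<Rightarrow> real" where
  "dyck_weight x w = x ^ (length w div 2)"

lemma dyck_weight_nonneg: "0 \<le> x \<Longrightarrow> 0 \<le> dyck_weight x w"
  by (simp add: dyck_weight_def)

lemma dyck_weight_dyck_join:
  "dyck v \<Longrightarrow> dyck u \<Longrightarrow> dyck_weight x (dyck_join v u) = x * dyck_weight x v * dyck_weight x u"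
  using length_dyck[of v] length_dyck[of u] by (simp add: dyck_weight_def dyck_join_def power_add)

lemma has_sum_mult_Times:
  fixes f g :: "'a \<Rightarrow> real"
  assumes "(f has_sum a) A" "(g has_sum b) B"
    and "\<And>x. x \<in> A \<Longrightarrow> 0 \<le> f x" "\<And>y. y \<in> B \<Longrightarrow> 0 \<le> g y"
  shows "((\<lambda>(x, y). f x * g y) has_sum a * b) (A \<times> B)"
proof (rule has_sum_SigmaI)
  show "((\<lambda>y. (\<lambda>(x, y). f x * g y) (x, y)) has_sum f x * b) B" for x
    using has_sum_cmult_right[OF assms(2)] by simp
  show "((\<lambda>x. f x * b) has_sum a * b) A"
    using has_sum_cmult_left[OF assms(1)] by simp
  then show "(\<lambda>(x, y). f x * g y) summable_on A \<times> B"
    using has_sum_cmult_right[OF assms(2)] assms(3,4)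
    by (intro summable_on_SigmaI[where g = "\<lambda>x. f x * b"]) (auto simp: summable_on_def)
qed

lemma has_sum_dyck_weight_dyck_join:
  assumes "0 \<le> x"
    and "(dyck_weight x has_sum a) A" "A \<subseteq> Collect dyck"
    and "(dyck_weight x has_sum b) B" "B \<subseteq> Collect dyck"
  shows "(dyck_weight x has_sum x * a * b) (case_prod dyck_join ` (A \<times> B))"
proof -
  have "((\<lambda>(v, u). (x * dyck_weight x v) * dyck_weight x u) has_sum x * a * b) (A \<times> B)"
    using assms by (intro has_sum_mult_Times has_sum_cmult_right) (auto simp: dyck_weight_nonneg)
  then have "((dyck_weight x \<circ> case_prod dyck_join) has_sum x * a * b) (A \<times> B)"
    using assms(3,5) by (subst has_sum_cong) (auto simp: dyck_weight_dyck_join subset_iff)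
  moreover have "inj_on (case_prod dyck_join) (A \<times> B)"
    using assms(3,5) by (blast intro: inj_on_subset[OF inj_on_dyck_join])
  ultimately show ?thesis
    by (simp add: has_sum_reindex)
qed

text \<open>The bound survives the induction step because 1/p is a fixed point of s \<mapsto> 1 + pq s^2.\<close>

lemma sum_dyck_weight_length_le:
  fixes p q :: real
  assumes "0 < p" "0 \<le> q" "p + q = 1"
  shows "sum (dyck_weight (p * q)) {w. dyck w \<and> length w \<le> 2 * n} \<le> 1 / p"
proof (induction n)
  case 0
  have "{w. dyck w \<and> length w \<le> 2 * 0} = {[]}"
    by (auto simp: dyck_Nil)
  then show ?case
    using assms by (simp add: dyck_weight_def field_simps)
next
  case (Suc n)
  let ?x = "p * q" and ?D = "{w. dyck w \<and> length w \<le> 2 * n}"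
  let ?s = "sum (dyck_weight ?x) ?D"
  have x: "0 \<le> ?x"
    using assms by simp
  have finite: "finite (case_prod dyck_join ` (?D \<times> ?D))"
    using finite_dyck_length_le by blast
  have "sum (dyck_weight ?x) {w. dyck w \<and> length w \<le> 2 * Suc n}
      \<le> sum (dyck_weight ?x) (insert [] (case_prod dyck_join ` (?D \<times> ?D)))"
    using finite dyck_length_le_Suc_subset x by (intro sum_mono2) (auto simp: dyck_weight_nonneg)
  also have "\<dots> \<le> 1 + sum (dyck_weight ?x) (case_prod dyck_join ` (?D \<times> ?D))"
    using finite x by (simp add: sum.insert_if dyck_weight_def sum_nonneg)
  also have "sum (dyck_weight ?x) (case_prod dyck_join ` (?D \<times> ?D))
      \<le> sum (dyck_weight ?x \<circ> case_prod dyck_join) (?D \<times> ?D)"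
    using finite_dyck_length_le x by (intro sum_image_le) (auto simp: dyck_weight_nonneg)
  also have "\<dots> = (\<Sum>(v, u)\<in>?D \<times> ?D. ?x * (dyck_weight ?x v * dyck_weight ?x u))"
    by (intro sum.cong) (auto simp: dyck_weight_dyck_join)
  also have "\<dots> = ?x * (\<Sum>v\<in>?D. \<Sum>u\<in>?D. dyck_weight ?x v * dyck_weight ?x u)"
    by (simp add: sum.cartesian_product[symmetric] sum_distrib_left)
  also have "\<dots> = ?x * (?s * ?s)"
    by (simp add: sum_product)
  also have "\<dots> \<le> ?x * (1 / p * (1 / p))"
    using Suc.IH x assms(1)
    by (intro mult_left_mono mult_mono) (auto simp: sum_nonneg dyck_weight_nonneg)
  also have "1 + ?x * (1 / p * (1 / p)) = 1 / p"
    using assms by (simp add: field_simps)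
  finally show ?case
    by simp
qed

lemma sum_dyck_weight_le:
  fixes p q :: real
  assumes "0 < p" "0 \<le> q" "p + q = 1" "finite F" "F \<subseteq> Collect dyck"
  shows "sum (dyck_weight (p * q)) F \<le> 1 / p"
proof -
  have "F \<subseteq> {w. dyck w \<and> length w \<le> 2 * sum length F}"
    using assms(4,5) member_le_sum[of _ F length] by fastforce
  then have "sum (dyck_weight (p * q)) F
      \<le> sum (dyck_weight (p * q)) {w. dyck w \<and> length w \<le> 2 * sum length F}"
    using assms by (intro sum_mono2 finite_dyck_length_le) (auto simp: dyck_weight_nonneg)
  also have "\<dots> \<le> 1 / p"
    using assms(1-3) by (rule sum_dyck_weight_length_le)
  finally show ?thesis .
qed

text \<open>F = 1 + pq F^2 forces F = 1/p or F = 1/q; as 1/q \<ge> 1/p and F \<le> 1/p, in either case F = 1/p.\<close>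

lemma has_sum_dyck_weight:
  fixes p q :: real
  assumes "0 \<le> q" "q \<le> p" "p + q = 1"
  shows "(dyck_weight (p * q) has_sum 1 / p) (Collect dyck)"
proof -
  let ?x = "p * q"
  define F where "F = infsum (dyck_weight ?x) (Collect dyck)"
  have p: "0 < p" and x: "0 \<le> ?x"
    using assms by auto
  have "dyck_weight ?x summable_on Collect dyck"
    using p assms(1,3) sum_dyck_weight_le
    by (intro nonneg_bdd_above_summable_on bdd_aboveI2) (auto simp: dyck_weight_nonneg)
  then have F: "(dyck_weight ?x has_sum F) (Collect dyck)"
    by (simp add: F_def)
  have "F \<le> 1 / p"
    by (rule has_sum_le_finite_sums[OF F sum_dyck_weight_le[OF p assms(1,3)]])
  have "(dyck_weight ?x has_sum dyck_weight ?x [] + ?x * F * F)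
      (insert [] (case_prod dyck_join ` (Collect dyck \<times> Collect dyck)))"
    using x F by (intro has_sum_insert has_sum_dyck_weight_dyck_join) (auto simp: dyck_join_def)
  then have "(dyck_weight ?x has_sum 1 + ?x * F * F) (Collect dyck)"
    by (simp add: dyck_weight_def flip: Collect_dyck_eq)
  with F have "F = 1 + ?x * F * F"
    by (rule has_sum_unique)
  have "(p * F - 1) * (q * F - 1) = ?x * F * F - (p + q) * F + 1"
    by (simp add: algebra_simps)
  also have "\<dots> = 0"
    using \<open>F = 1 + ?x * F * F\<close> assms(3) by simp
  finally have "(p * F - 1) * (q * F - 1) = 0" .
  then consider "p * F = 1" | "q * F = 1"
    by auto
  then have "F = 1 / p"
  proof cases
    case 2
    have "0 \<le> F"
      using F by (rule has_sum_nonneg) (simp add: dyck_weight_nonneg x)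
    with 2 assms(2) have "1 \<le> p * F"
      by (metis mult_right_mono)
    then have "1 / p \<le> F"
      using p by (simp add: field_simps)
    with \<open>F \<le> 1 / p\<close> show ?thesis
      by simp
  qed (use p in \<open>simp add: field_simps\<close>)
  with F show ?thesis
    by simp
qed

lemma has_sum_dyck_weight_final_H_run:
  fixes p q :: real
  assumes "0 \<le> q" "q \<le> p" "p + q = 1"
  shows "(dyck_weight (p * q) has_sum q ^ j) {w. dyck w \<and> final_H_run w = j}"
proof (induction j)
  case 0
  show ?case
    using has_sum_finite[of "{[]}" "dyck_weight (p * q)"]
    by (simp add: dyck_final_H_run_0 dyck_weight_def[of _ "[]"])
next
  case (Suc j)
  have "p * q * (1 / p) = q"
    using assms by auto
  moreover have "(dyck_weight (p * q) has_sum p * q * (1 / p) * q ^ j)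
      (case_prod dyck_join ` (Collect dyck \<times> {w. dyck w \<and> final_H_run w = j}))"
    using assms Suc.IH by (intro has_sum_dyck_weight_dyck_join has_sum_dyck_weight) auto
  ultimately show ?case
    by (simp add: dyck_final_H_run_Suc)
qed

lemma has_sum_cycle_prob:
  assumes "(dyck_weight (p * q) has_sum s) A"
  shows "(cycle_prob p q has_sum q^2 * p * s) ((\<lambda>w. [S, S] @ w @ [H]) ` A)"
proof -
  have "inj_on (\<lambda>w. [S, S] @ w @ [H]) A"
    by (rule inj_onI) simp
  moreover have "cycle_prob p q \<circ> (\<lambda>w. [S, S] @ w @ [H]) = (\<lambda>w. q^2 * p * dyck_weight (p * q) w)"
    by (auto simp: cycle_prob_def dyck_weight_def)
  ultimately show ?thesis
    using has_sum_cmult_right[OF assms, of "q^2 * p"] by (simp add: has_sum_reindex)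
qed

theorem lemma3:
  fixes p q :: real and k :: nat
  assumes "0 < q" "q < p" "p + q = 1" "k \<ge> 1"
  shows "(\<Sum>\<^sub>\<infinity>c\<in>{c\<in>SS_cycles. final_H_run c = k}. cycle_prob p q c)
           / (\<Sum>\<^sub>\<infinity>c\<in>SS_cycles. cycle_prob p q c) = p * q ^ (k - 1)"
proof -
  let ?cycle = "\<lambda>w. [S, S] @ w @ [H]"
  have cycles: "SS_cycles = ?cycle ` Collect dyck"
    by (auto simp: SS_cycles_def)
  have "final_H_run (?cycle w) = Suc (final_H_run w)" for w
    using final_H_run_dyck_join[of "[S]" w] by (simp add: dyck_join_def)
  with assms(4) have cycles_k:
    "{c\<in>SS_cycles. final_H_run c = k} = ?cycle ` {w. dyck w \<and> final_H_run w = k - 1}"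
    by (auto simp: cycles)
  have bounds: "0 \<le> q" "q \<le> p"
    using assms(1,2) by simp_all
  have "(\<Sum>\<^sub>\<infinity>c\<in>{c\<in>SS_cycles. final_H_run c = k}. cycle_prob p q c) = q^2 * p * q ^ (k - 1)"
    unfolding cycles_k
    by (intro infsumI has_sum_cycle_prob has_sum_dyck_weight_final_H_run bounds assms(3))
  moreover have "(\<Sum>\<^sub>\<infinity>c\<in>SS_cycles. cycle_prob p q c) = q^2 * p * (1 / p)"
    unfolding cycles
    by (intro infsumI has_sum_cycle_prob has_sum_dyck_weight bounds assms(3))
  ultimately show ?thesis
    using assms(1,2) by (simp add: field_simps power2_eq_square)
qed

end
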